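(* Under the hypotheses and with the notation of the context, the function $\nu\colon K\times K\to\widehat H$, $\nu(y_1,y_2)(h)=\tilde\nu(y_1,y_2)(h)(1)$ (i.e. $\nu=\psi_1\circ\tilde\nu$), takes values in $\widehat H$ and satisfies $\nu(y_2,y_3)\,\nu(y_1y_2,y_3)^{-1}\,\nu(y_1,y_2y_3)\,\big(\nu(y_1,y_2)^{y_3}\big)^{-1}=1$, hence defines an element of $\underline H^2(K,\widehat H)$.
   Context: $k$ algebraically closed of characteristic $0$; $G$ finite, $\omega\in Z^3(G,k^\times)$ normalized; $H\trianglelefteq G$ abelian; $K=G/H$, $p(g)=Hg$, $u\colon K\to G$ a section with $u(p(1_G))=1_G$, $x\triangleleft g=p(u(x)g)$. $C=\mathrm{Fun}(K,k^\times)$ with left $G$-action $(g\triangleright f)(x)=f(x\triangleleft g)$; normalized cochains, multiplicative coboundary $\delta$. $\mu\in C^2(G,C)$ with $\delta^2\mu=\omega$, and ${}^y\mu/\mu$ trivial in $H^2(G,C)$ for all $y\in K$, where $({}^y\gamma)(g_1,\dots,g_n)(x)=\gamma(g_1,\dots,g_n)(yx)$. For each $y\in K$, $\eta_y\in C^1(G,C)$ with $\delta^1\eta_y={}^y\mu/\mu$, and $\tilde\nu(y_1,y_2)={}^{y_2}\eta_{y_1}\eta_{y_2}/\eta_{y_1y_2}\in Z^1(G,C)$. $\widehat H=\mathrm{Hom}(H,k^\times)$ is a right $K$-module via $\rho^y(h)=\rho(u(y)hu(y)^{-1})$. $\underline H^2(K,\widehat H)$ is the second cohomology with coboundary $(\underline\delta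 f)(y_1,\dots,y_{n+1})=f(y_2,\dots)\prod_i f(\dots,y_iy_{i+1},\dots)^{(-1)^i}(f(y_1,\dots,y_n)^{y_{n+1}})^{(-1)^{n+1}}$. *)

theory Defs
  imports "HOL-Algebra.Coset" "HOL-Computational_Algebra.Polynomial"
begin

definition alg_closed :: "'k::field itself \<Rightarrow> bool" where
  "alg_closed (_ :: 'k itself) \<longleftrightarrow>
     (\<forall>q :: 'k poly. degree q \<ge> 1 \<longrightarrow> (\<exists>x. poly q x = 0))"

definition char_zero_field :: "'k::field itself \<Rightarrow> bool" where
  "char_zero_field (_ :: 'k itself) \<longleftrightarrow> (\<forall>n::nat. n > 0 \<longrightarrow> (of_nat n :: 'k) \<noteq> 0)"

definition qact :: "('g, 'm) monoid_scheme \<Rightarrow> 'g set \<Rightarrow> ('g set \<Rightarrow> 'g) \<Rightarrow> 'g set \<Rightarrow> 'g \<Rightarrow> 'g set" where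
  "qact G H u x g = H #>\<^bsub>G\<^esub> (u x \<otimes>\<^bsub>G\<^esub> g)"

(* left G-action on C = Fun(K, k^x): (g \<triangleright> f)(x) = f(x \<triangleleft> g) *)
definition actC :: "('g, 'm) monoid_scheme \<Rightarrow> 'g set \<Rightarrow> ('g set \<Rightarrow> 'g) \<Rightarrow> 'g \<Rightarrow> ('g set \<Rightarrow> 'k) \<Rightarrow> ('g set \<Rightarrow> 'k)" where
  "actC G H u g f = (\<lambda>x. f (qact G H u x g))"

definition cob1 :: "('g, 'm) monoid_scheme \<Rightarrow> 'g set \<Rightarrow> ('g set \<Rightarrow> 'g) \<Rightarrow> ('g \<Rightarrow> 'g set \<Rightarrow> 'k::field)
    \<Rightarrow> 'g \<Rightarrow> 'g \<Rightarrow> 'g set \<Rightarrow> 'k" where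
  "cob1 G H u \<eta> g1 g2 = (\<lambda>x. actC G H u g1 (\<eta> g2) x * \<eta> g1 x / \<eta> (g1 \<otimes>\<^bsub>G\<^esub> g2) x)"

definition cob2 :: "('g, 'm) monoid_scheme \<Rightarrow> 'g set \<Rightarrow> ('g set \<Rightarrow> 'g) \<Rightarrow> ('g \<Rightarrow> 'g \<Rightarrow> 'g set \<Rightarrow> 'k::field)
    \<Rightarrow> 'g \<Rightarrow> 'g \<Rightarrow> 'g \<Rightarrow> 'g set \<Rightarrow> 'k" where
  "cob2 G H u \<mu> g1 g2 g3 = (\<lambda>x. actC G H u g1 (\<mu> g2 g3) x * \<mu> g1 (g2 \<otimes>\<^bsub>G\<^esub> g3) x
      / (\<mu> (g1 \<otimes>\<^bsub>G\<^esub> g2) g3 x * \<mu> g1 g2 x))"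

definition shift2 :: "('g, 'm) monoid_scheme \<Rightarrow> 'g set \<Rightarrow> 'g set \<Rightarrow> ('g \<Rightarrow> 'g \<Rightarrow> 'g set \<Rightarrow> 'k)
    \<Rightarrow> 'g \<Rightarrow> 'g \<Rightarrow> 'g set \<Rightarrow> 'k" where
  "shift2 G H y \<gamma> g1 g2 = (\<lambda>x. \<gamma> g1 g2 (y \<otimes>\<^bsub>G Mod H\<^esub> x))"

definition shift1 :: "('g, 'm) monoid_scheme \<Rightarrow> 'g set \<Rightarrow> 'g set \<Rightarrow> ('g \<Rightarrow> 'g set \<Rightarrow> 'k)
    \<Rightarrow> 'g \<Rightarrow> 'g set \<Rightarrow> 'k" where
  "shift1 G H y \<gamma> g = (\<lambda>x. \<gamma> g (y \<otimes>\<^bsub>G Mod H\<^esub> x))"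

definition nu_tilde :: "('g, 'm) monoid_scheme \<Rightarrow> 'g set \<Rightarrow> ('g set \<Rightarrow> 'g \<Rightarrow> 'g set \<Rightarrow> 'k::field)
    \<Rightarrow> 'g set \<Rightarrow> 'g set \<Rightarrow> 'g \<Rightarrow> 'g set \<Rightarrow> 'k" where
  "nu_tilde G H \<eta> y1 y2 = (\<lambda>g x. shift1 G H y2 (\<eta> y1) g x * \<eta> y2 g x / \<eta> (y1 \<otimes>\<^bsub>G Mod H\<^esub> y2) g x)"

definition nu :: "('g, 'm) monoid_scheme \<Rightarrow> 'g set \<Rightarrow> ('g set \<Rightarrow> 'g \<Rightarrow> 'g set \<Rightarrow> 'k::field)
    \<Rightarrow> 'g set \<Rightarrow> 'g set \<Rightarrow> 'g \<Rightarrow> 'k" where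
  "nu G H \<eta> y1 y2 = (\<lambda>h. nu_tilde G H \<eta> y1 y2 h \<one>\<^bsub>G Mod H\<^esub>)"

definition is_char :: "('g, 'm) monoid_scheme \<Rightarrow> 'g set \<Rightarrow> ('g \<Rightarrow> 'k::field) \<Rightarrow> bool" where
  "is_char G H \<rho> \<longleftrightarrow> (\<forall>h\<in>H. \<rho> h \<noteq> 0) \<and>
     (\<forall>h\<in>H. \<forall>h'\<in>H. \<rho> (h \<otimes>\<^bsub>G\<^esub> h') = \<rho> h * \<rho> h')"

definition char_act :: "('g, 'm) monoid_scheme \<Rightarrow> ('g set \<Rightarrow> 'g) \<Rightarrow> ('g \<Rightarrow> 'k) \<Rightarrow> 'g set \<Rightarrow> ('g \<Rightarrow> 'k)" where
  "char_act G u \<rho> y = (\<lambda>h. \<rho> (u y \<otimes>\<^bsub>G\<^esub> h \<otimes>\<^bsub>G\<^esub> inv\<^bsub>G\<^esub> (u y)))"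

end

theory Submission
  imports Defs
begin

(* Since \<delta>\<eta>_y = ^y\<mu>/\<mu> and \<delta> commutes with the shifts ^y(-), the coboundary of
   \<nu>~(y1,y2) = ^{y2}\<eta>_{y1} \<eta>_{y2} / \<eta>_{y1 y2} is (^{y1 y2}\<mu> / ^{y2}\<mu>) (^{y2}\<mu> / \<mu>) / (^{y1 y2}\<mu> / \<mu>) = 1,
   so \<nu>~(y1,y2) is a 1-cocycle G -> C. As H acts trivially on K, its cocycle identity restricted
   to H and evaluated at 1 makes \<nu>(y1,y2) a character of H, and evaluating at y instead gives the
   twist of that character by y. After this substitution the 2-cocycle identity for \<nu> cancels
   term by term once \<nu>~ is written out in terms of \<eta>. *)

lemma cob1_mult_div:
  fixes f g k :: "'g \<Rightarrow> 'g set \<Rightarrow> 'k::field"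
  shows "cob1 G H u (\<lambda>a x. f a x * g a x / k a x) a b x
    = cob1 G H u f a b x * cob1 G H u g a b x / cob1 G H u k a b x"
  unfolding cob1_def actC_def by (simp add: divide_inverse ac_simps)

locale quotient_section = normal H G for H and G (structure) +
  fixes u :: "'a set \<Rightarrow> 'a"
  assumes u_carrier: "x \<in> carrier (G Mod H) \<Longrightarrow> u x \<in> carrier G"
    and u_coset: "x \<in> carrier (G Mod H) \<Longrightarrow> H #> u x = x"
    and u_one: "u H = \<one>"
begin

sublocale K: group "G Mod H"
  by (rule factorgroup_is_group)

lemma rcos_in_FactGroup: "g \<in> carrier G \<Longrightarrow> H #> g \<in> carrier (G Mod H)"
  by (simp add: FactGroup_def rcosetsI subset)

lemma qact_eq:
  assumes "x \<in> carrier (G Mod H)" "g \<in> carrier G"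
  shows "qact G H u x g = x <#> (H #> g)"
  unfolding qact_def using assms rcos_sum[of "u x" g] u_carrier u_coset by simp

lemma mult_qact:
  assumes "y \<in> carrier (G Mod H)" "x \<in> carrier (G Mod H)" "g \<in> carrier G"
  shows "y <#> qact G H u x g = qact G H u (y <#> x) g"
  using assms K.m_assoc[of y x "H #> g"] K.m_closed[of y x] rcos_in_FactGroup
  by (simp add: qact_eq)

lemma qact_subgroup:
  assumes "x \<in> carrier (G Mod H)" "h \<in> H"
  shows "qact G H u x h = x"
  using assms K.r_one[of x] by (simp add: qact_eq rcos_const)

lemma qact_unit: "g \<in> carrier G \<Longrightarrow> qact G H u H g = H #> g"
  by (simp add: qact_def u_one)

lemma cob1_shift1:
  assumes "y \<in> carrier (G Mod H)" "x \<in> carrier (G Mod H)" "a \<in> carrier G"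
  shows "cob1 G H u (shift1 G H y f) a b x = cob1 G H u f a b (y <#> x)"
  using assms by (simp add: cob1_def actC_def shift1_def mult_qact)

end

locale shift_coboundary = quotient_section H G u for H and G (structure) and u +
  fixes \<mu> :: "'a \<Rightarrow> 'a \<Rightarrow> 'a set \<Rightarrow> 'k::field"
    and \<eta> :: "'a set \<Rightarrow> 'a \<Rightarrow> 'a set \<Rightarrow> 'k"
  assumes mu_nonzero:
      "\<lbrakk>a \<in> carrier G; b \<in> carrier G; x \<in> carrier (G Mod H)\<rbrakk> \<Longrightarrow> \<mu> a b x \<noteq> 0"
    and eta_nonzero:
      "\<lbrakk>y \<in> carrier (G Mod H); a \<in> carrier G; x \<in> carrier (G Mod H)\<rbrakk> \<Longrightarrow> \<eta> y a x \<noteq> 0"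
    and cob1_eta:
      "\<lbrakk>y \<in> carrier (G Mod H); a \<in> carrier G; b \<in> carrier G; x \<in> carrier (G Mod H)\<rbrakk>
        \<Longrightarrow> cob1 G H u (\<eta> y) a b x = shift2 G H y \<mu> a b x / \<mu> a b x"
begin

lemma cob1_nu_tilde:
  assumes y: "y1 \<in> carrier (G Mod H)" "y2 \<in> carrier (G Mod H)"
    and ab: "a \<in> carrier G" "b \<in> carrier G" and x: "x \<in> carrier (G Mod H)"
  shows "cob1 G H u (nu_tilde G H \<eta> y1 y2) a b x = 1"
proof -
  have y2x: "y2 <#> x \<in> carrier (G Mod H)" and y12: "y1 <#> y2 \<in> carrier (G Mod H)"
    and y12x: "y1 <#> y2 <#> x \<in> carrier (G Mod H)"
    using K.m_closed y x by simp_all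
  have assoc: "y1 <#> (y2 <#> x) = y1 <#> y2 <#> x"
    using K.m_assoc y x by simp
  let ?m = "\<lambda>z. \<mu> a b z"
  have "cob1 G H u (nu_tilde G H \<eta> y1 y2) a b x
      = cob1 G H u (\<eta> y1) a b (y2 <#> x) * cob1 G H u (\<eta> y2) a b x
        / cob1 G H u (\<eta> (y1 <#> y2)) a b x"
    unfolding nu_tilde_def cob1_mult_div using y x ab by (simp add: cob1_shift1)
  also have "\<dots> = ?m (y1 <#> y2 <#> x) / ?m (y2 <#> x) * (?m (y2 <#> x) / ?m x)
        / (?m (y1 <#> y2 <#> x) / ?m x)"
    using y x ab y2x y12 by (simp add: cob1_eta shift2_def assoc)
  also have "\<dots> = 1"
    using mu_nonzero ab x y2x y12x by simp
  finally show ?thesis .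
qed

lemma nu_tilde_nonzero:
  assumes "y1 \<in> carrier (G Mod H)" "y2 \<in> carrier (G Mod H)" "a \<in> carrier G"
    and "x \<in> carrier (G Mod H)"
  shows "nu_tilde G H \<eta> y1 y2 a x \<noteq> 0"
  using assms K.m_closed eta_nonzero by (simp add: nu_tilde_def shift1_def)

lemma nu_tilde_cocycle:
  assumes y: "y1 \<in> carrier (G Mod H)" "y2 \<in> carrier (G Mod H)"
    and ab: "a \<in> carrier G" "b \<in> carrier G" and x: "x \<in> carrier (G Mod H)"
  shows "nu_tilde G H \<eta> y1 y2 b (qact G H u x a) * nu_tilde G H \<eta> y1 y2 a x
    = nu_tilde G H \<eta> y1 y2 (a \<otimes> b) x"
  using cob1_nu_tilde[OF assms]
  by (simp add: cob1_def actC_def divide_eq_1_iff)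

lemma is_char_nu:
  assumes y: "y1 \<in> carrier (G Mod H)" "y2 \<in> carrier (G Mod H)"
  shows "is_char G H (nu G H \<eta> y1 y2)"
  unfolding is_char_def nu_def one_FactGroup
proof (intro conjI ballI)
  fix h assume "h \<in> H"
  then show "nu_tilde G H \<eta> y1 y2 h H \<noteq> 0"
    using nu_tilde_nonzero y subset K.one_closed by auto
next
  fix h h' assume h: "h \<in> H" "h' \<in> H"
  then show "nu_tilde G H \<eta> y1 y2 (h \<otimes> h') H
      = nu_tilde G H \<eta> y1 y2 h H * nu_tilde G H \<eta> y1 y2 h' H"
    using nu_tilde_cocycle[OF y, of h h' H] qact_subgroup[of H h] subset K.one_closed
    by (auto simp: mult.commute)
qed

text \<open>Conjugating by the section gives the twisted action on \<open>\<widehat>H\<close>: comparing the cocycle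
  identity for \<open>g h\<close> and \<open>h' g\<close>, where \<open>g = u y\<^sub>3\<close> and \<open>h' = g h g\<inverse>\<close>, moves the
  evaluation point from \<open>1\<close> to \<open>1 \<triangleleft> g = y\<^sub>3\<close>.\<close>

lemma char_act_nu:
  assumes y: "y1 \<in> carrier (G Mod H)" "y2 \<in> carrier (G Mod H)" "y3 \<in> carrier (G Mod H)"
    and h: "h \<in> H"
  shows "char_act G u (nu G H \<eta> y1 y2) y3 h = nu_tilde G H \<eta> y1 y2 h y3"
proof -
  define g where "g = u y3"
  define h' where "h' = g \<otimes> h \<otimes> inv g"
  let ?\<nu> = "nu_tilde G H \<eta> y1 y2"
  have g: "g \<in> carrier G" "H #> g = y3"
    using u_carrier u_coset y(3) by (simp_all add: g_def)
  have hG: "h \<in> carrier G" using h subset by blast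
  have h': "h' \<in> H" "h' \<in> carrier G"
    using inv_op_closed2 g h subset by (auto simp: h'_def)
  have swap: "h' \<otimes> g = g \<otimes> h"
    using g(1) hG by (simp add: h'_def m_assoc)
  have unit: "H \<in> carrier (G Mod H)"
    using K.one_closed by simp
  have "?\<nu> h y3 * ?\<nu> g H = ?\<nu> (g \<otimes> h) H"
    using nu_tilde_cocycle[OF y(1,2) g(1) hG unit] qact_unit[OF g(1)] g(2) by simp
  also have "\<dots> = ?\<nu> g H * ?\<nu> h' H"
    using nu_tilde_cocycle[OF y(1,2) h'(2) g(1) unit] qact_subgroup[OF unit h'(1)] swap
    by simp
  finally have "?\<nu> h' H = ?\<nu> h y3"
    using nu_tilde_nonzero[OF y(1,2) g(1) unit] by (simp add: mult.commute)
  then show ?thesis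
    by (simp add: char_act_def nu_def h'_def g_def)
qed

lemma nu_cocycle:
  assumes y: "y1 \<in> carrier (G Mod H)" "y2 \<in> carrier (G Mod H)" "y3 \<in> carrier (G Mod H)"
    and h: "h \<in> H"
  shows "nu G H \<eta> y2 y3 h / nu G H \<eta> (y1 \<otimes>\<^bsub>G Mod H\<^esub> y2) y3 h
    * nu G H \<eta> y1 (y2 \<otimes>\<^bsub>G Mod H\<^esub> y3) h / char_act G u (nu G H \<eta> y1 y2) y3 h = 1"
proof -
  have hG: "h \<in> carrier G" using h subset by blast
  have unit: "H \<in> carrier (G Mod H)"
    using K.one_closed by simp
  have y12: "y1 <#> y2 \<in> carrier (G Mod H)" and y23: "y2 <#> y3 \<in> carrier (G Mod H)"
    and y123: "y1 <#> y2 <#> y3 \<in> carrier (G Mod H)"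
    using K.m_closed y by simp_all
  have assoc: "y1 <#> (y2 <#> y3) = y1 <#> y2 <#> y3"
    using K.m_assoc y by simp
  have rone: "y <#> H = y" if "y \<in> carrier (G Mod H)" for y
    using K.r_one that by simp
  have "\<eta> y2 h y3 \<noteq> 0" "\<eta> y3 h H \<noteq> 0" "\<eta> (y2 <#> y3) h H \<noteq> 0"
    "\<eta> (y1 <#> y2) h y3 \<noteq> 0" "\<eta> (y1 <#> y2 <#> y3) h H \<noteq> 0" "\<eta> y1 h (y2 <#> y3) \<noteq> 0"
    using eta_nonzero y y12 y23 y123 hG unit by simp_all
  then show ?thesis
    unfolding char_act_nu[OF y h]
    using y y23 by (simp add: nu_def nu_tilde_def shift1_def rone assoc field_simps)
qed

end

theorem corollary4p3:
  fixes G :: "('g, 'm) monoid_scheme" and H :: "'g set"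
    and u :: "'g set \<Rightarrow> 'g"
    and \<omega> :: "'g \<Rightarrow> 'g \<Rightarrow> 'g \<Rightarrow> 'k::field"
    and \<mu> :: "'g \<Rightarrow> 'g \<Rightarrow> 'g set \<Rightarrow> 'k"
    and \<eta> :: "'g set \<Rightarrow> 'g \<Rightarrow> 'g set \<Rightarrow> 'k"
  assumes k_closed: "alg_closed TYPE('k)"
    and k_char0: "char_zero_field TYPE('k)"
    and grp: "group G" and fin: "finite (carrier G)"
    and normal: "H \<lhd> G"
    and abelian: "\<forall>a\<in>H. \<forall>b\<in>H. a \<otimes>\<^bsub>G\<^esub> b = b \<otimes>\<^bsub>G\<^esub> a"
    and u_sec: "\<forall>x\<in>carrier (G Mod H). u x \<in> carrier G \<and> H #>\<^bsub>G\<^esub> u x = x"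
    and u_one: "u (H #>\<^bsub>G\<^esub> \<one>\<^bsub>G\<^esub>) = \<one>\<^bsub>G\<^esub>"
    \<comment> \<open>\<omega> \<in> Z^3(G, k^x), normalized\<close>
    and \<omega>_nz: "\<forall>a\<in>carrier G. \<forall>b\<in>carrier G. \<forall>c\<in>carrier G. \<omega> a b c \<noteq> 0"
    and \<omega>_norm: "\<forall>a\<in>carrier G. \<forall>b\<in>carrier G.
        \<omega> \<one>\<^bsub>G\<^esub> a b = 1 \<and> \<omega> a \<one>\<^bsub>G\<^esub> b = 1 \<and> \<omega> a b \<one>\<^bsub>G\<^esub> = 1"
    and \<omega>_cocycle: "\<forall>a\<in>carrier G. \<forall>b\<in>carrier G. \<forall>c\<in>carrier G. \<forall>d\<in>carrier G.
        \<omega> b c d * \<omega> a (b \<otimes>\<^bsub>G\<^esub> c) d * \<omega> a b c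
          = \<omega> (a \<otimes>\<^bsub>G\<^esub> b) c d * \<omega> a b (c \<otimes>\<^bsub>G\<^esub> d)"
    \<comment> \<open>\<mu> \<in> C^2(G, C), normalized, with \<delta>\<mu> = \<omega>\<close>
    and \<mu>_nz: "\<forall>a\<in>carrier G. \<forall>b\<in>carrier G. \<forall>x\<in>carrier (G Mod H). \<mu> a b x \<noteq> 0"
    and \<mu>_norm: "\<forall>a\<in>carrier G. \<forall>x\<in>carrier (G Mod H).
        \<mu> \<one>\<^bsub>G\<^esub> a x = 1 \<and> \<mu> a \<one>\<^bsub>G\<^esub> x = 1"
    and \<mu>_cob: "\<forall>a\<in>carrier G. \<forall>b\<in>carrier G. \<forall>c\<in>carrier G. \<forall>x\<in>carrier (G Mod H).
        cob2 G H u \<mu> a b c x = \<omega> a b c"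
    \<comment> \<open>\<eta>_y \<in> C^1(G, C), normalized, with \<delta>\<eta>_y = ^y\<mu>/\<mu>\<close>
    and \<eta>_nz: "\<forall>y\<in>carrier (G Mod H). \<forall>a\<in>carrier G. \<forall>x\<in>carrier (G Mod H). \<eta> y a x \<noteq> 0"
    and \<eta>_norm: "\<forall>y\<in>carrier (G Mod H). \<forall>x\<in>carrier (G Mod H). \<eta> y \<one>\<^bsub>G\<^esub> x = 1"
    and \<eta>_cob: "\<forall>y\<in>carrier (G Mod H). \<forall>a\<in>carrier G. \<forall>b\<in>carrier G. \<forall>x\<in>carrier (G Mod H).
        cob1 G H u (\<eta> y) a b x = shift2 G H y \<mu> a b x / \<mu> a b x"
  shows "(\<forall>y1\<in>carrier (G Mod H). \<forall>y2\<in>carrier (G Mod H). is_char G H (nu G H \<eta> y1 y2))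
    \<and> (\<forall>y1\<in>carrier (G Mod H). \<forall>y2\<in>carrier (G Mod H). \<forall>y3\<in>carrier (G Mod H). \<forall>h\<in>H.
         nu G H \<eta> y2 y3 h / nu G H \<eta> (y1 \<otimes>\<^bsub>G Mod H\<^esub> y2) y3 h
         * nu G H \<eta> y1 (y2 \<otimes>\<^bsub>G Mod H\<^esub> y3) h / char_act G u (nu G H \<eta> y1 y2) y3 h = 1)"
proof -
  \<comment> \<open>Only the section properties of \<open>u\<close>, the nonvanishing of \<open>\<mu>\<close> and \<open>\<eta>\<close> and the
    equation \<open>\<delta>\<eta>\<^sub>y = \<^sup>y\<mu>/\<mu>\<close> are used.\<close>
  interpret N: normal H G by (rule normal)
  have "H #>\<^bsub>G\<^esub> \<one>\<^bsub>G\<^esub> = H"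
    using N.subset by simp
  then interpret shift_coboundary H G u \<mu> \<eta>
    using u_sec u_one \<mu>_nz \<eta>_nz \<eta>_cob by unfold_locales auto
  show ?thesis
    using is_char_nu nu_cocycle by blast
qed

end
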